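(* Let $N$ be a lattice, $M=\operatorname{Hom}(N,\mathbb{Z})$, $\sigma\subset N_{\mathbb{R}}$ a full-dimensional strongly convex rational polyhedral cone with primitive generators $\vec v_1,\dots,\vec v_r$, and let $a_1,\dots,a_r\ge0$ be rational numbers (the coefficients of an effective torus-invariant $\mathbb{Q}$-divisor $D=\sum a_iD_i$). Let $$P'=\{\vec v\in M_{\mathbb{R}}:\ \vec v\cdot\vec v_i\ge0\ \forall i,\text{ and for every }\vec k\in M\setminus\sigma^\vee\text{ there is }i\text{ with }(\vec v+\vec k)\cdot\vec v_i<-a_i\}.$$ Then $P'=P_\sigma^D:=\{\vec v\in M_{\mathbb{R}}:0\le\vec v\cdot\vec v_i<1-a_i\ \forall i\}$.
   Context: $\sigma^\vee=\{\vec u\in M_{\mathbb{R}}:\vec u\cdot\vec v\ge0\ \forall\vec v\in\sigma\}$. *)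

theory Defs
  imports "HOL-Analysis.Analysis"
begin

text \<open>The lattice N is modelled as the integer points of real^'n; M = Hom(N,Z) is identified
  with the integer points of real^'n via the standard dot product.\<close>

definition lattice_pt :: "real^'n \<Rightarrow> bool" where
  "lattice_pt x \<longleftrightarrow> (\<forall>j. x $ j \<in> \<int>)"

definition primitive_vec :: "real^'n \<Rightarrow> bool" where
  "primitive_vec v \<longleftrightarrow> lattice_pt v \<and>
     (\<forall>w (k::nat). lattice_pt w \<and> v = real k *\<^sub>R w \<longrightarrow> k = 1)"

definition gen_cone :: "nat \<Rightarrow> (nat \<Rightarrow> real^'n) \<Rightarrow> (real^'n) set" where
  "gen_cone r v = {x. \<exists>c. (\<forall>i<r. c i \<ge> 0) \<and> x = (\<Sum>i<r. c i *\<^sub>R v i)}"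

definition dual_cone :: "(real^'n) set \<Rightarrow> (real^'n) set" where
  "dual_cone \<sigma> = {u. \<forall>v\<in>\<sigma>. u \<bullet> v \<ge> 0}"

definition primitive_ray_generators :: "nat \<Rightarrow> (nat \<Rightarrow> real^'n) \<Rightarrow> bool" where
  "primitive_ray_generators r v \<longleftrightarrow>
     (\<forall>i<r. primitive_vec (v i)) \<and>
     inj_on v {..<r} \<and>
     (\<forall>i<r. v i \<notin> {x. \<exists>c. (\<forall>j<r. c j \<ge> 0) \<and> x = (\<Sum>j\<in>{..<r} - {i}. c j *\<^sub>R v j)}) \<and>
     gen_cone r v \<inter> uminus ` gen_cone r v = {0} \<and>
     interior (gen_cone r v) \<noteq> {}"

definition P_prime :: "nat \<Rightarrow> (nat \<Rightarrow> real^'n) \<Rightarrow> (nat \<Rightarrow> real) \<Rightarrow> (real^'n) set" where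
  "P_prime r v a = {x. (\<forall>i<r. x \<bullet> v i \<ge> 0) \<and>
     (\<forall>k. lattice_pt k \<and> k \<notin> dual_cone (gen_cone r v) \<longrightarrow>
          (\<exists>i<r. (x + k) \<bullet> v i < - a i))}"

definition P_sigma_D :: "nat \<Rightarrow> (nat \<Rightarrow> real^'n) \<Rightarrow> (nat \<Rightarrow> real) \<Rightarrow> (real^'n) set" where
  "P_sigma_D r v a = {x. \<forall>i<r. 0 \<le> x \<bullet> v i \<and> x \<bullet> v i < 1 - a i}"

end

theory Submission
  imports Defs
begin

text \<open>A lattice point \<open>k \<notin> \<sigma>\<^sup>\<or>\<close> has \<open>k \<bullet> v\<^sub>i \<le> -1\<close> for some \<open>i\<close>, which gives
  \<open>P\<^sub>\<sigma>\<^sup>D \<subseteq> P'\<close>. Conversely, every ray generator \<open>v\<^sub>j\<close> admits a lattice point \<open>k\<close> with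
  \<open>k \<bullet> v\<^sub>j = -1\<close> and \<open>k \<bullet> v\<^sub>i \<ge> 0\<close> for \<open>i \<noteq> j\<close>; such \<open>k\<close> lies outside \<open>\<sigma>\<^sup>\<or>\<close>, so for
  \<open>x \<in> P'\<close> some \<open>(x + k) \<bullet> v\<^sub>i < -a\<^sub>i\<close>, which is only possible for \<open>i = j\<close> and forces
  \<open>x \<bullet> v\<^sub>j < 1 - a\<^sub>j\<close>. To build \<open>k\<close>, expose the ray of \<open>v\<^sub>j\<close> by a real functional \<open>u\<close>
  (\<open>u \<bullet> v\<^sub>j = 0\<close>, \<open>u \<bullet> v\<^sub>i > 0\<close> otherwise), replace it by a lattice functional \<open>U\<close> with the
  same sign pattern, and take \<open>k = m U - k\<^sub>0\<close> for large \<open>m\<close>, where \<open>k\<^sub>0 \<bullet> v\<^sub>j = 1\<close> exists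
  because \<open>v\<^sub>j\<close> is primitive.\<close>

lemma lattice_pt_add: "lattice_pt x \<Longrightarrow> lattice_pt y \<Longrightarrow> lattice_pt (x + y)"
  unfolding lattice_pt_def by auto

lemma lattice_pt_scaleR_of_int: "lattice_pt x \<Longrightarrow> lattice_pt (of_int m *\<^sub>R x)"
  unfolding lattice_pt_def by auto

lemma lattice_pt_axis: "lattice_pt (axis l (1::real))"
  unfolding lattice_pt_def axis_def by auto

lemma inner_lattice_pt_Ints: "lattice_pt x \<Longrightarrow> lattice_pt y \<Longrightarrow> x \<bullet> y \<in> \<int>"
  unfolding lattice_pt_def inner_vec_def by (auto intro!: Ints_sum Ints_mult)

lemma lattice_pt_multiple_of_rational:
  fixes p :: "real^'n"
  assumes "\<And>l. p $ l \<in> \<rat>"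
  obtains m :: nat where "m > 0" "lattice_pt (real m *\<^sub>R p)"
proof -
  have "\<exists>d::nat. d > 0 \<and> real d * p $ l \<in> \<int>" for l
  proof -
    obtain z n where "n > 0" "p $ l = of_int z / of_int n"
      using assms by (metis Rats_cases')
    then show ?thesis by (intro exI[of _ "nat n"]) auto
  qed
  then obtain D where D: "\<And>l. D l > (0::nat)" "\<And>l. real (D l) * p $ l \<in> \<int>" by metis
  define m where "m = (\<Prod>l\<in>UNIV. D l)"
  have "lattice_pt (real m *\<^sub>R p)"
    unfolding lattice_pt_def
  proof
    fix l
    have "m = (\<Prod>l'\<in>UNIV - {l}. D l') * D l" unfolding m_def by (simp add: prod.remove mult.commute)
    then have "(real m *\<^sub>R p) $ l = real (\<Prod>l'\<in>UNIV - {l}. D l') * (real (D l) * p $ l)"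
      by simp
    then show "(real m *\<^sub>R p) $ l \<in> \<int>" by (metis D(2) Ints_mult Ints_of_nat)
  qed
  moreover have "m > 0" unfolding m_def using D(1) by (simp add: prod_pos)
  ultimately show thesis using that by blast
qed

lemma open_contains_rational_vector:
  fixes S :: "(real^'n) set"
  assumes "open S" "u \<in> S"
  obtains q where "\<And>l. q $ l \<in> \<rat>" "q \<in> S"
proof -
  obtain e where e: "e > 0" "ball u e \<subseteq> S" using assms open_contains_ball by blast
  define e' where "e' = e / real CARD('n)"
  have "e' > 0" unfolding e'_def using e by simp
  then have "\<forall>l. \<exists>x\<in>\<rat>. \<bar>x - u $ l\<bar> < e'"
    using rational_approximation by metis
  then obtain f where f: "\<And>l. f l \<in> \<rat>" "\<And>l. \<bar>f l - u $ l\<bar> < e'" by metis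
  define q where "q = (\<chi> l. f l)"
  have "dist u q \<le> (\<Sum>l\<in>UNIV. \<bar>(u - q) $ l\<bar>)" unfolding dist_norm by (rule norm_le_l1_cart)
  also have "\<dots> < (\<Sum>l\<in>(UNIV::'n set). e')"
    by (rule sum_strict_mono) (use f in \<open>auto simp: q_def abs_minus_commute\<close>)
  also have "\<dots> = e" unfolding e'_def by simp
  finally have "q \<in> S" using e by auto
  moreover have "\<And>l. q $ l \<in> \<rat>" unfolding q_def using f by simp
  ultimately show thesis using that by blast
qed

lemma convex_cone_hull_image_finite:
  assumes "finite I"
  shows "convex_cone hull (v ` I) = {\<Sum>i\<in>I. c i *\<^sub>R v i | c. \<forall>i\<in>I. 0 \<le> c i}"
    (is "_ = ?C")
proof
  have "convex_cone ?C"
    unfolding convex_cone_iff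
  proof (intro conjI ballI allI impI)
    show "0 \<in> ?C" by (auto intro!: exI[of _ "\<lambda>_. 0"])
    fix x y assume "x \<in> ?C" "y \<in> ?C"
    then obtain c d where "\<forall>i\<in>I. 0 \<le> c i" "\<forall>i\<in>I. 0 \<le> d i"
      "x = (\<Sum>i\<in>I. c i *\<^sub>R v i)" "y = (\<Sum>i\<in>I. d i *\<^sub>R v i)" by blast
    then show "x + y \<in> ?C"
      by (auto intro!: exI[of _ "\<lambda>i. c i + d i"] simp: scaleR_add_left sum.distrib)
  next
    fix x and t :: real assume "x \<in> ?C" "0 \<le> t"
    then obtain c where "\<forall>i\<in>I. 0 \<le> c i" "x = (\<Sum>i\<in>I. c i *\<^sub>R v i)" by blast
    with \<open>0 \<le> t\<close> show "t *\<^sub>R x \<in> ?C"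
      by (auto intro!: exI[of _ "\<lambda>i. t * c i"] simp: scaleR_sum_right)
  qed
  moreover have "v ` I \<subseteq> ?C"
  proof
    fix x assume "x \<in> v ` I"
    then obtain j where j: "j \<in> I" "x = v j" by blast
    have "x = (\<Sum>i\<in>I. (if i = j then v i else 0))"
      using j assms by (simp add: sum.delta)
    also have "\<dots> = (\<Sum>i\<in>I. (if i = j then 1 else 0) *\<^sub>R v i)"
      by (rule sum.cong) auto
    finally show "x \<in> ?C" by force
  qed
  ultimately show "convex_cone hull (v ` I) \<subseteq> ?C" by (simp add: hull_minimal)
next
  have "(\<Sum>i\<in>J. c i *\<^sub>R v i) \<in> convex_cone hull (v ` I)"
    if "finite J" "J \<subseteq> I" "\<forall>i\<in>J. 0 \<le> c i" for J c
    using that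
    by (induction J rule: finite_induct)
      (auto intro: convex_cone_hull_add convex_cone_hull_mul hull_inc convex_cone_hull_contains_0)
  then show "?C \<subseteq> convex_cone hull (v ` I)" using assms by blast
qed

lemma inner_nonneg_on_convex_cone:
  fixes w :: "'a::real_inner"
  assumes "convex_cone S" and "\<And>y. y \<in> S \<Longrightarrow> \<beta> < w \<bullet> y" and "x \<in> S"
  shows "0 \<le> w \<bullet> x"
proof (rule ccontr)
  assume neg: "\<not> 0 \<le> w \<bullet> x"
  have "\<beta> < 0" using assms(2)[of 0] convex_cone_contains_0[OF assms(1)] by simp
  then have "(\<beta> / (w \<bullet> x)) *\<^sub>R x \<in> S"
    using neg by (intro convex_cone_scaleR[OF assms(1) _ assms(3)]) (simp add: divide_nonpos_neg)
  with neg show False using assms(2) by fastforce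
qed

lemma pointed_convex_cone_eq_0:
  fixes C :: "'a::real_vector set"
  assumes "C \<inter> uminus ` C = {0}" "x \<in> C" "- x \<in> C"
  shows "x = 0"
proof -
  have "x \<in> uminus ` C" by (rule rev_image_eqI[OF assms(3)]) simp
  then show ?thesis using assms(1,2) by blast
qed

lemma convex_cone_line_plus:
  assumes "convex_cone C"
  shows "convex_cone {t *\<^sub>R a + g | t g. g \<in> C}" (is "convex_cone ?T")
  unfolding convex_cone_iff
proof (intro conjI ballI allI impI)
  show "0 \<in> ?T" using convex_cone_contains_0[OF assms] by force
  fix x y assume "x \<in> ?T" "y \<in> ?T"
  then obtain s t g h where "x = s *\<^sub>R a + g" "y = t *\<^sub>R a + h" "g \<in> C" "h \<in> C" by blast
  then show "x + y \<in> ?T"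
    by (intro CollectI exI[of _ "s + t"] exI[of _ "g + h"])
      (auto simp: algebra_simps intro: convex_cone_add[OF assms])
next
  fix x and c :: real assume "x \<in> ?T" "0 \<le> c"
  then obtain t g where "x = t *\<^sub>R a + g" "g \<in> C" by blast
  with \<open>0 \<le> c\<close> show "c *\<^sub>R x \<in> ?T"
    by (intro CollectI exI[of _ "c * t"] exI[of _ "c *\<^sub>R g"])
      (auto simp: algebra_simps intro: convex_cone_scaleR[OF assms])
qed

lemma neg_generator_not_in_line_plus_cone:
  assumes "a \<in> V" "b \<in> V" "b \<noteq> a" "b \<noteq> 0"
    and extreme: "a \<notin> convex_cone hull (V - {a})"
    and pointed: "convex_cone hull V \<inter> uminus ` (convex_cone hull V) = {0}"
  shows "- b \<notin> {t *\<^sub>R a + g | t g. g \<in> convex_cone hull (V - {a})}"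
proof
  let ?K = "convex_cone hull V" and ?K' = "convex_cone hull (V - {a})"
  assume "- b \<in> {t *\<^sub>R a + g | t g. g \<in> ?K'}"
  then obtain t g where g: "- b = t *\<^sub>R a + g" "g \<in> ?K'" by blast
  have b: "b \<in> ?K'" using assms(2,3) by (simp add: hull_inc)
  have "?K' \<subseteq> ?K" by (simp add: hull_mono)
  show False
  proof (cases "t < 0")
    case True
    have "g = - b - t *\<^sub>R a" using g(1) by (simp add: eq_diff_eq)
    then have "a = (1 / - t) *\<^sub>R (b + g)" using True by simp
    also have "\<dots> \<in> ?K'"
      by (rule convex_cone_hull_mul[OF convex_cone_hull_add[OF b g(2)]]) (use True in simp)
    finally show False using extreme by contradiction
  next
    case False
    have "b + g \<in> ?K" using b g(2) \<open>?K' \<subseteq> ?K\<close> by (auto intro: convex_cone_hull_add)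
    moreover have "- (b + g) \<in> ?K"
      using g(1) False assms(1) by (auto simp: algebra_simps intro: convex_cone_hull_mul hull_inc)
    ultimately have "b + g = 0" by (rule pointed_convex_cone_eq_0[OF pointed])
    then have "- b \<in> ?K" using g(2) \<open>?K' \<subseteq> ?K\<close> by (auto simp: add_eq_0_iff)
    then show False using pointed_convex_cone_eq_0[OF pointed] assms(2,4) by (simp add: hull_inc)
  qed
qed

text \<open>The convex cone generated by \<open>V\<close> and \<open>-a\<close> lies in \<open>\<real>a + cone(V - {a})\<close>, which misses
  \<open>-b\<close>; a hyperplane separating \<open>-b\<close> from this closed cone exposes the ray through \<open>a\<close>.\<close>
lemma exposing_functional_separates_generator:
  fixes V :: "'a::euclidean_space set"
  assumes "finite V" "a \<in> V" "b \<in> V" "b \<noteq> a" "b \<noteq> 0"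
    and extreme: "a \<notin> convex_cone hull (V - {a})"
    and pointed: "convex_cone hull V \<inter> uminus ` (convex_cone hull V) = {0}"
  obtains u where "u \<bullet> a = 0" "\<And>x. x \<in> V \<Longrightarrow> 0 \<le> u \<bullet> x" "0 < u \<bullet> b"
proof -
  let ?H = "convex_cone hull (insert (- a) V)"
  let ?T = "{t *\<^sub>R a + g | t g. g \<in> convex_cone hull (V - {a})}"
  have "insert (- a) V \<subseteq> ?T"
  proof -
    have "- a = (- 1) *\<^sub>R a + 0" "a = 1 *\<^sub>R a + 0" by simp_all
    moreover have "x = 0 *\<^sub>R a + x" for x :: 'a by simp
    ultimately show ?thesis using convex_cone_hull_contains_0 hull_inc[of _ "V - {a}"] by blast
  qed
  then have "?H \<subseteq> ?T" by (simp add: hull_minimal convex_cone_line_plus convex_cone_convex_cone_hull)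
  then have "- b \<notin> ?H" using neg_generator_not_in_line_plus_cone[OF assms(2-7)] by blast
  moreover have "closed ?H" using assms(1) by (simp add: closed_convex_cone_hull)
  ultimately obtain w \<beta> where w: "w \<bullet> (- b) < \<beta>" "\<And>y. y \<in> ?H \<Longrightarrow> \<beta> < w \<bullet> y"
    using separating_hyperplane_closed_point[OF convex_convex_cone_hull] by metis
  have nonneg: "0 \<le> w \<bullet> y" if "y \<in> insert (- a) V" for y
    by (rule inner_nonneg_on_convex_cone[OF convex_cone_convex_cone_hull w(2) hull_inc[OF that]])
  have "w \<bullet> a = 0" using nonneg[of a] nonneg[of "- a"] assms(2) by simp
  moreover have "0 < w \<bullet> b"
    using w(1) w(2)[OF convex_cone_hull_contains_0] by simp
  ultimately show thesis using that nonneg by blast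
qed

lemma exists_functional_vanishing_only_at_extreme_generator:
  fixes V :: "'a::euclidean_space set"
  assumes "finite V" "a \<in> V" "0 \<notin> V"
    and "a \<notin> convex_cone hull (V - {a})"
    and "convex_cone hull V \<inter> uminus ` (convex_cone hull V) = {0}"
  obtains u where "u \<bullet> a = 0" "\<And>b. b \<in> V - {a} \<Longrightarrow> 0 < u \<bullet> b"
proof -
  have "\<forall>b\<in>V - {a}. \<exists>u. u \<bullet> a = 0 \<and> (\<forall>x\<in>V. 0 \<le> u \<bullet> x) \<and> 0 < u \<bullet> b"
    using exposing_functional_separates_generator[OF assms(1,2) _ _ _ assms(4,5)] assms(3)
    by (metis DiffE singletonI)
  then obtain U where U: "\<And>b. b \<in> V - {a} \<Longrightarrow> U b \<bullet> a = 0 \<and> (\<forall>x\<in>V. 0 \<le> U b \<bullet> x) \<and> 0 < U b \<bullet> b"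
    by metis
  have "(\<Sum>c\<in>V - {a}. U c) \<bullet> b > 0" if "b \<in> V - {a}" for b
  proof -
    have "0 < U b \<bullet> b" using U that by blast
    also have "\<dots> \<le> (\<Sum>c\<in>V - {a}. U c \<bullet> b)"
      using that U assms(1) by (intro member_le_sum) auto
    finally show ?thesis by (simp add: inner_sum_left)
  qed
  moreover have "(\<Sum>c\<in>V - {a}. U c) \<bullet> a = 0" using U by (simp add: inner_sum_left)
  ultimately show thesis using that by blast
qed

lemma int_additive_subgroup_generator:
  fixes I :: "int set"
  assumes add: "\<And>m n. m \<in> I \<Longrightarrow> n \<in> I \<Longrightarrow> m + n \<in> I"
    and mult: "\<And>c m. m \<in> I \<Longrightarrow> c * m \<in> I"
    and "m \<in> I" "m \<noteq> 0"
  obtains d where "d > 0" "d \<in> I" "\<And>n. n \<in> I \<Longrightarrow> d dvd n"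
proof -
  have "\<bar>m\<bar> \<in> I" using mult[OF assms(3), of "sgn m"] by (metis abs_sgn mult.commute)
  then have ex: "\<exists>n::nat. n > 0 \<and> int n \<in> I" using assms(4) by (intro exI[of _ "nat \<bar>m\<bar>"]) auto
  define d where "d = (LEAST n::nat. n > 0 \<and> int n \<in> I)"
  have d: "d > 0" "int d \<in> I" using LeastI_ex[OF ex] unfolding d_def by auto
  have d_min: "d \<le> k" if "0 < k" "int k \<in> I" for k
    using that unfolding d_def by (simp add: Least_le)
  have "int d dvd n" if "n \<in> I" for n
  proof -
    have "n + (- (n div int d)) * int d = n mod int d" by (simp add: minus_div_mult_eq_mod[symmetric])
    then have "n mod int d \<in> I" using add[OF that mult[OF d(2)]] by metis
    moreover have "int (nat (n mod int d)) = n mod int d" using d(1) by simp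
    ultimately have "int (nat (n mod int d)) \<in> I" by simp
    moreover have "nat (n mod int d) < d" using d(1) by (simp add: nat_less_iff)
    ultimately have "\<not> 0 < nat (n mod int d)" using d_min by (meson leD)
    moreover have "0 \<le> n mod int d" using d(1) by simp
    ultimately show ?thesis by (simp add: dvd_eq_mod_eq_0)
  qed
  with d show thesis using that[of "int d"] by simp
qed

lemma primitive_vec_nonzero: "primitive_vec v \<Longrightarrow> v \<noteq> 0"
  unfolding primitive_vec_def by (metis of_nat_0 scaleR_zero_left zero_neq_one)

text \<open>The values \<open>k \<bullet> v\<close> at lattice points \<open>k\<close> form a subgroup \<open>d\<int>\<close> of \<open>\<int>\<close> containing every
  coordinate of \<open>v\<close>; so \<open>v / d\<close> is a lattice point and primitivity forces \<open>d = 1\<close>.\<close>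
lemma primitive_vec_inner_eq_1:
  assumes "primitive_vec v"
  obtains k where "lattice_pt k" "k \<bullet> v = 1"
proof -
  define I where "I = {m::int. \<exists>k. lattice_pt k \<and> k \<bullet> v = of_int m}"
  have v: "lattice_pt v" using assms unfolding primitive_vec_def by auto
  have coord: "\<exists>m\<in>I. v $ l = of_int m" for l
  proof -
    obtain m where m: "v $ l = of_int m" using v unfolding lattice_pt_def by (auto elim: Ints_cases)
    then have "axis l 1 \<bullet> v = of_int m" by (simp add: inner_axis')
    with m show ?thesis using lattice_pt_axis unfolding I_def by blast
  qed
  obtain l where "v $ l \<noteq> 0" using primitive_vec_nonzero[OF assms] by (metis vec_eq_iff zero_index)
  with coord obtain m where "m \<in> I" "m \<noteq> 0" by fastforce
  then obtain d where d: "d > 0" "d \<in> I" "\<And>n. n \<in> I \<Longrightarrow> d dvd n"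
    by (rule int_additive_subgroup_generator[rotated 2])
      (auto simp: I_def inner_add_left intro: lattice_pt_add lattice_pt_scaleR_of_int)
  define w where "w = (\<chi> l. v $ l / real_of_int d)"
  have "lattice_pt w"
    unfolding lattice_pt_def w_def
  proof
    fix l
    obtain m where "m \<in> I" "v $ l = of_int m" using coord by blast
    moreover obtain q where "m = d * q" using d(3)[OF calculation(1)] by (rule dvdE)
    ultimately show "(\<chi> l. v $ l / real_of_int d) $ l \<in> \<int>" using d(1) by simp
  qed
  moreover have "v = real (nat d) *\<^sub>R w" unfolding w_def using d(1) by (simp add: vec_eq_iff)
  ultimately have "nat d = 1" using assms unfolding primitive_vec_def by blast
  then have "d = 1" using d(1) by linarith
  then have "1 \<in> I" using d(2) by simp
  then obtain k where "lattice_pt k" "k \<bullet> v = of_int 1" unfolding I_def by blast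
  then show thesis using that by simp
qed

text \<open>The projection \<open>q \<mapsto> (a \<bullet> a) q - (q \<bullet> a) a\<close> onto \<open>a\<^sup>\<perp>\<close> maps rational vectors to rational
  vectors, so a rational vector close to \<open>u\<close> yields a rational functional vanishing at \<open>a\<close>
  and still positive on \<open>V\<close>; clearing denominators gives a lattice point.\<close>
lemma lattice_functional_from_real_functional:
  fixes a u :: "real^'n"
  assumes "finite V" "lattice_pt a" "a \<noteq> 0" "\<And>b. b \<in> V \<Longrightarrow> lattice_pt b"
    and "u \<bullet> a = 0" "\<And>b. b \<in> V \<Longrightarrow> 0 < u \<bullet> b"
  obtains U where "lattice_pt U" "U \<bullet> a = 0" "\<And>b. b \<in> V \<Longrightarrow> 1 \<le> U \<bullet> b"
proof -
  define P where "P q = (a \<bullet> a) *\<^sub>R q - (q \<bullet> a) *\<^sub>R a" for q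
  have P_a: "P q \<bullet> a = 0" for q unfolding P_def by (simp add: inner_diff_left mult.commute)
  define S where "S = {q. \<forall>b\<in>V. 0 < P q \<bullet> b}"
  have "S = (\<Inter>b\<in>V. {q. 0 < P q \<bullet> b})" unfolding S_def by auto
  also have "open \<dots>" using assms(1) unfolding P_def
    by (intro open_INT ballI open_Collect_less) (auto intro!: continuous_intros)
  finally have "open S" .
  moreover have "u \<in> S"
  proof -
    have "P u \<bullet> b = (a \<bullet> a) * (u \<bullet> b)" for b unfolding P_def using assms(5) by (simp add: inner_diff_left)
    moreover have "0 < a \<bullet> a" using assms(3) by simp
    ultimately show ?thesis unfolding S_def using assms(6) by simp
  qed
  ultimately obtain q where q: "\<And>l. q $ l \<in> \<rat>" "q \<in> S" by (rule open_contains_rational_vector) auto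
  have "P q $ l \<in> \<rat>" for l
  proof -
    have a: "a $ l \<in> \<rat>" for l using assms(2) unfolding lattice_pt_def by (simp add: Ints_subset_Rats[THEN subsetD])
    then have "a \<bullet> a \<in> \<rat>" "q \<bullet> a \<in> \<rat>" using q(1) unfolding inner_vec_def by (auto intro!: Rats_sum Rats_mult)
    then show ?thesis unfolding P_def using a q(1) by (simp add: Rats_diff Rats_mult)
  qed
  then obtain m :: nat where m: "m > 0" "lattice_pt (real m *\<^sub>R P q)"
    by (rule lattice_pt_multiple_of_rational)
  have "1 \<le> (real m *\<^sub>R P q) \<bullet> b" if "b \<in> V" for b
  proof -
    have "0 < (real m *\<^sub>R P q) \<bullet> b" using m(1) q(2) that unfolding S_def by simp
    moreover have "(real m *\<^sub>R P q) \<bullet> b \<in> \<int>" using inner_lattice_pt_Ints m(2) assms(4) that by blast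
    ultimately show ?thesis using Ints_nonzero_abs_ge1 by fastforce
  qed
  with m(2) P_a show thesis using that by simp
qed

lemma lattice_pt_inner_minus_1:
  fixes a :: "real^'n"
  assumes "finite V" "lattice_pt U" "U \<bullet> a = 0" "\<And>b. b \<in> V \<Longrightarrow> 1 \<le> U \<bullet> b"
    and "lattice_pt k\<^sub>0" "k\<^sub>0 \<bullet> a = 1"
  obtains k where "lattice_pt k" "k \<bullet> a = -1" "\<And>b. b \<in> V \<Longrightarrow> 0 \<le> k \<bullet> b"
proof -
  define m where "m = \<lceil>\<Sum>b\<in>V. \<bar>k\<^sub>0 \<bullet> b\<bar>\<rceil>"
  define k where "k = of_int m *\<^sub>R U - k\<^sub>0"
  have "k = of_int m *\<^sub>R U + of_int (-1) *\<^sub>R k\<^sub>0" unfolding k_def by simp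
  then have "lattice_pt k" by (simp only: lattice_pt_add lattice_pt_scaleR_of_int assms(2,5))
  moreover have "k \<bullet> a = -1" unfolding k_def using assms(3,6) by (simp add: inner_diff_left)
  moreover have "0 \<le> k \<bullet> b" if "b \<in> V" for b
  proof -
    have "\<bar>k\<^sub>0 \<bullet> b\<bar> \<le> (\<Sum>b\<in>V. \<bar>k\<^sub>0 \<bullet> b\<bar>)" using assms(1) that by (intro member_le_sum) auto
    also have "\<dots> \<le> of_int m" unfolding m_def by (rule le_of_int_ceiling)
    finally have "\<bar>k\<^sub>0 \<bullet> b\<bar> \<le> of_int m" .
    moreover have "of_int m * 1 \<le> of_int m * (U \<bullet> b)"
      using assms(4)[OF that] calculation by (intro mult_left_mono) auto
    ultimately show ?thesis unfolding k_def by (simp add: inner_diff_left)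
  qed
  ultimately show thesis using that by blast
qed

lemma gen_cone_eq_convex_cone_hull: "gen_cone r v = convex_cone hull (v ` {..<r})"
  unfolding gen_cone_def convex_cone_hull_image_finite[OF finite_lessThan] by auto

lemma mem_dual_cone_gen_cone_iff: "k \<in> dual_cone (gen_cone r v) \<longleftrightarrow> (\<forall>i<r. 0 \<le> k \<bullet> v i)"
proof
  assume "k \<in> dual_cone (gen_cone r v)"
  then show "\<forall>i<r. 0 \<le> k \<bullet> v i"
    unfolding dual_cone_def gen_cone_eq_convex_cone_hull by (auto intro: hull_inc)
next
  assume "\<forall>i<r. 0 \<le> k \<bullet> v i"
  then show "k \<in> dual_cone (gen_cone r v)"
    unfolding dual_cone_def gen_cone_def
    by (auto simp: inner_sum_right intro!: sum_nonneg)
qed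

lemma primitive_ray_generator_not_in_cone_of_others:
  assumes "primitive_ray_generators r v" "j < r"
  shows "v j \<notin> convex_cone hull (v ` {..<r} - {v j})"
proof
  assume "v j \<in> convex_cone hull (v ` {..<r} - {v j})"
  moreover have "v ` {..<r} - {v j} = v ` ({..<r} - {j})"
    using assms inj_on_image_set_diff[of v "{..<r}" "{..<r}" "{j}"]
    unfolding primitive_ray_generators_def by auto
  ultimately obtain c where c: "\<forall>i\<in>{..<r} - {j}. 0 \<le> c i" "v j = (\<Sum>i\<in>{..<r} - {j}. c i *\<^sub>R v i)"
    by (auto simp: convex_cone_hull_image_finite)
  have "v j = (\<Sum>i\<in>{..<r} - {j}. (c(j := 0)) i *\<^sub>R v i)"
    unfolding c(2) by (rule sum.cong) auto
  moreover have "\<forall>i<r. 0 \<le> (c(j := 0)) i" using c(1) by simp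
  ultimately show False using assms unfolding primitive_ray_generators_def by blast
qed

lemma primitive_ray_generator_dual_lattice_pt:
  assumes prg: "primitive_ray_generators r v" and j: "j < r"
  obtains k where "lattice_pt k" "k \<bullet> v j = -1" "\<And>i. i < r \<Longrightarrow> i \<noteq> j \<Longrightarrow> 0 \<le> k \<bullet> v i"
proof -
  let ?V = "v ` {..<r}"
  have prim: "primitive_vec (v i)" if "i < r" for i
    using prg that unfolding primitive_ray_generators_def by blast
  then have lattice: "lattice_pt b" if "b \<in> ?V" for b
    using that unfolding primitive_vec_def by blast
  have "0 \<notin> ?V" using prim primitive_vec_nonzero by fastforce
  moreover have "convex_cone hull ?V \<inter> uminus ` (convex_cone hull ?V) = {0}"
    using prg unfolding primitive_ray_generators_def gen_cone_eq_convex_cone_hull by blast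
  ultimately obtain u where u: "u \<bullet> v j = 0" "\<And>b. b \<in> ?V - {v j} \<Longrightarrow> 0 < u \<bullet> b"
    using exists_functional_vanishing_only_at_extreme_generator[of ?V "v j"]
      primitive_ray_generator_not_in_cone_of_others[OF prg j] j by blast
  obtain U where U: "lattice_pt U" "U \<bullet> v j = 0" "\<And>b. b \<in> ?V - {v j} \<Longrightarrow> 1 \<le> U \<bullet> b"
    using lattice_functional_from_real_functional[of "?V - {v j}" "v j" u] u lattice j
      primitive_vec_nonzero[OF prim[OF j]] by blast
  obtain k\<^sub>0 where "lattice_pt k\<^sub>0" "k\<^sub>0 \<bullet> v j = 1" using primitive_vec_inner_eq_1[OF prim[OF j]] .
  then obtain k where k: "lattice_pt k" "k \<bullet> v j = -1" "\<And>b. b \<in> ?V - {v j} \<Longrightarrow> 0 \<le> k \<bullet> b"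
    using lattice_pt_inner_minus_1[of "?V - {v j}" U "v j"] U by blast
  have "v i \<in> ?V - {v j}" if "i < r" "i \<noteq> j" for i
    using prg that j unfolding primitive_ray_generators_def by (auto dest: inj_onD)
  with k show thesis using that by blast
qed

lemma P_sigma_D_subset_P_prime:
  assumes "\<And>i. i < r \<Longrightarrow> lattice_pt (v i)"
  shows "P_sigma_D r v a \<subseteq> P_prime r v a"
proof
  fix x assume x: "x \<in> P_sigma_D r v a"
  have "\<exists>i<r. (x + k) \<bullet> v i < - a i" if k: "lattice_pt k" "k \<notin> dual_cone (gen_cone r v)" for k
  proof -
    obtain i where i: "i < r" "k \<bullet> v i < 0" using k(2) mem_dual_cone_gen_cone_iff by force
    have "k \<bullet> v i \<in> \<int>" using inner_lattice_pt_Ints k(1) assms i(1) by blast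
    then have "k \<bullet> v i \<le> -1" using i(2) Ints_nonzero_abs_ge1 by fastforce
    moreover have "x \<bullet> v i < 1 - a i" using x i(1) unfolding P_sigma_D_def by blast
    ultimately show ?thesis using i(1) by (auto simp: inner_add_left)
  qed
  with x show "x \<in> P_prime r v a" unfolding P_sigma_D_def P_prime_def by blast
qed

lemma P_prime_subset_P_sigma_D:
  assumes prg: "primitive_ray_generators r v" and a: "\<And>i. i < r \<Longrightarrow> 0 \<le> a i"
  shows "P_prime r v a \<subseteq> P_sigma_D r v a"
proof
  fix x assume x: "x \<in> P_prime r v a"
  have "x \<bullet> v j < 1 - a j" if j: "j < r" for j
  proof (rule ccontr)
    assume "\<not> x \<bullet> v j < 1 - a j"
    obtain k where k: "lattice_pt k" "k \<bullet> v j = -1" "\<And>i. i < r \<Longrightarrow> i \<noteq> j \<Longrightarrow> 0 \<le> k \<bullet> v i"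
      using primitive_ray_generator_dual_lattice_pt[OF prg j] by blast
    then have "k \<notin> dual_cone (gen_cone r v)" using j by (auto simp: mem_dual_cone_gen_cone_iff)
    then obtain i where i: "i < r" "(x + k) \<bullet> v i < - a i"
      using x k(1) unfolding P_prime_def by blast
    have "0 \<le> x \<bullet> v i" using x i(1) unfolding P_prime_def by blast
    show False
    proof (cases "i = j")
      case True
      with i(2) k(2) \<open>\<not> x \<bullet> v j < 1 - a j\<close> show False by (simp add: inner_add_left)
    next
      case False
      with i \<open>0 \<le> x \<bullet> v i\<close> k(3) a show False by (fastforce simp: inner_add_left)
    qed
  qed
  with x show "x \<in> P_sigma_D r v a" unfolding P_prime_def P_sigma_D_def by blast
qed

theorem lemma4p20:
  fixes r :: nat and v :: "nat \<Rightarrow> real^'n" and a :: "nat \<Rightarrow> real"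
  assumes "primitive_ray_generators r v"
    and "\<forall>i<r. a i \<in> \<rat> \<and> a i \<ge> 0"
  shows "P_prime r v a = P_sigma_D r v a"
proof
  show "P_prime r v a \<subseteq> P_sigma_D r v a"
    using P_prime_subset_P_sigma_D assms by blast
  have "\<And>i. i < r \<Longrightarrow> lattice_pt (v i)"
    using assms(1) unfolding primitive_ray_generators_def primitive_vec_def by blast
  then show "P_sigma_D r v a \<subseteq> P_prime r v a" by (rule P_sigma_D_subset_P_prime)
qed

end
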